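(* Let $\mathcal{I}$ be an ideal on $\omega$ such that $\mathrm{fin}\subseteq\mathcal{I}$. If there is a Borel $\mathcal{I}$-MED family $\mathcal{E}\subseteq\omega^\omega$, then there is a closed $\mathcal{I}$-MED family (closed in $\omega^\omega$ with the product topology).
   Context: $\mathrm{fin}$ is the ideal of finite subsets of $\omega$. Functions $f,g\in\omega^\omega$ are $\mathcal{I}$-eventually different ($\mathcal{I}$-ED) if $\{n:f(n)=g(n)\}\in\mathcal{I}$; $\mathcal{E}\subseteq\omega^\omega$ is an $\mathcal{I}$-MED family if any two distinct members are $\mathcal{I}$-ED and for every $h\in\omega^\omega$ there is $f\in\mathcal{E}$ such that $f,h$ are not $\mathcal{I}$-ED. *)

theory Defs
  imports "HOL-Analysis.Analysis"
begin

text \<open>Baire space \<open>\<omega>\<^sup>\<omega>\<close> is the type \<open>nat \<Rightarrow> nat\<close>, carrying the product topology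
  (the instance from HOL-Analysis Function_Topology; \<open>nat\<close> has the discrete topology).\<close>

definition fin_ideal :: "nat set set" where
  "fin_ideal = {A. finite A}"

definition is_ideal :: "nat set set \<Rightarrow> bool" where
  "is_ideal I \<longleftrightarrow> {} \<in> I \<and> UNIV \<notin> I \<and>
     (\<forall>A B. A \<in> I \<longrightarrow> B \<subseteq> A \<longrightarrow> B \<in> I) \<and>
     (\<forall>A B. A \<in> I \<longrightarrow> B \<in> I \<longrightarrow> A \<union> B \<in> I)"

definition I_ED :: "nat set set \<Rightarrow> (nat \<Rightarrow> nat) \<Rightarrow> (nat \<Rightarrow> nat) \<Rightarrow> bool" where
  "I_ED I f g \<longleftrightarrow> {n. f n = g n} \<in> I"

definition I_MED :: "nat set set \<Rightarrow> (nat \<Rightarrow> nat) set \<Rightarrow> bool" where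
  "I_MED I E \<longleftrightarrow> (\<forall>f\<in>E. \<forall>g\<in>E. f \<noteq> g \<longrightarrow> I_ED I f g) \<and>
     (\<forall>h. \<exists>f\<in>E. \<not> I_ED I f h)"

end

theory Submission
  imports Defs "HOL-Library.Nat_Bijection"
begin

text \<open>Every Borel subset of Baire space is the injective projection of a closed subset of
  \<open>\<omega>\<^sup>\<omega> \<times> \<omega>\<^sup>\<omega>\<close> (Lusin--Souslin): \<open>E = fst ` G\<close> with \<open>G\<close> closed and a unique witness \<open>x\<close>
  for each \<open>f \<in> E\<close>. Replace \<open>f\<close> by the function that, at the reserved position \<open>e m\<close>, holds a code
  of \<open>f\<close> and \<open>x\<close> restricted to \<open>{0..m}\<close>, and elsewhere copies \<open>f (\<sigma> n)\<close>. Decoding is continuous, so the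
  new family is a closed copy of \<open>G\<close>. Codes of whole prefixes of different functions agree only
  finitely often, so \<open>\<I>\<close>-eventual difference survives as long as \<open>\<sigma>\<close> pulls \<open>\<I>\<close>-small sets back to
  \<open>\<I>\<close>-small sets, and maximality survives when every \<open>h\<close> is a \<open>\<sigma>\<close>-copy of some \<open>h'\<close>. If \<open>\<I>\<close>
  contains an infinite set \<open>Q\<close>, reserve \<open>Q\<close> and take \<open>\<sigma> = id\<close>; otherwise \<open>\<I>\<close> is \<open>fin\<close>, and we
  reserve the odd positions and copy \<open>f (n div 2)\<close> to the even ones.\<close>

definition agree_below :: "nat \<Rightarrow> (nat \<Rightarrow> nat) \<Rightarrow> (nat \<Rightarrow> nat) \<Rightarrow> bool" where
  "agree_below k f g \<longleftrightarrow> (\<forall>i<k. f i = g i)"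

lemma agree_below_sym: "agree_below k f g \<Longrightarrow> agree_below k g f"
  by (simp add: agree_below_def)

lemma open_agree_below: "open {h. agree_below k g h}"
proof -
  have "open {h. \<forall>i\<in>{..<k}. h (id i) \<in> {g i}}"
    by (rule product_topology_basis') (auto simp: open_discrete)
  moreover have "{h. \<forall>i\<in>{..<k}. h (id i) \<in> {g i}} = {h. agree_below k g h}"
    by (auto simp: agree_below_def)
  ultimately show ?thesis
    by simp
qed

lemma open_contains_agree_below:
  assumes "open U" "g \<in> U"
  obtains k where "{h. agree_below k g h} \<subseteq> U"
proof -
  have "openin (product_topology (\<lambda>i. euclidean) UNIV) U"
    using assms(1) unfolding open_fun_def by simp
  from product_topology_open_contains_basis[OF this assms(2)]
  obtain X where X: "g \<in> Pi\<^sub>E UNIV X" "finite {i. X i \<noteq> UNIV}" "Pi\<^sub>E UNIV X \<subseteq> U"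
    by auto
  obtain k where k: "\<And>i. X i \<noteq> UNIV \<Longrightarrow> i < k"
    using finite_nat_bounded[OF X(2)] by auto
  have "{h. agree_below k g h} \<subseteq> Pi\<^sub>E UNIV X"
  proof
    fix h assume h: "h \<in> {h. agree_below k g h}"
    have "h i \<in> X i" for i
    proof (cases "i < k")
      case True
      then have "h i = g i"
        using h by (simp add: agree_below_def)
      then show ?thesis
        using X(1) by (simp add: PiE_iff)
    next
      case False
      then show ?thesis
        using k[of i] by auto
    qed
    then show "h \<in> Pi\<^sub>E UNIV X"
      by (simp add: PiE_iff)
  qed
  then show thesis
    using X(3) by (intro that) (rule subset_trans)
qed

lemma closed_if_determined_below:
  assumes "\<And>g h. agree_below k g h \<Longrightarrow> g \<in> S \<Longrightarrow> h \<in> S"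
  shows "closed S"
  unfolding closed_def
proof (subst open_subopen, intro ballI)
  fix g assume "g \<in> - S"
  then have "{h. agree_below k g h} \<subseteq> - S"
    using assms agree_below_sym by blast
  then show "\<exists>T. open T \<and> g \<in> T \<and> T \<subseteq> - S"
    by (intro exI[of _ "{h. agree_below k g h}"] conjI open_agree_below) (auto simp: agree_below_def)
qed

lemma continuous_on_if_determined_below:
  fixes \<phi> :: "(nat \<Rightarrow> nat) \<times> (nat \<Rightarrow> nat) \<Rightarrow> 'a::topological_space"
  assumes "\<And>f x f' x'. agree_below k f f' \<Longrightarrow> agree_below k x x' \<Longrightarrow> \<phi> (f, x) = \<phi> (f', x')"
  shows "continuous_on UNIV \<phi>"
  unfolding continuous_on_open_vimage[OF open_UNIV]
proof (intro allI impI)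
  fix B :: "'a set"
  show "open (\<phi> -` B \<inter> UNIV)"
  proof (subst open_subopen, intro ballI)
    fix p assume p: "p \<in> \<phi> -` B \<inter> UNIV"
    obtain f x where fx: "p = (f, x)" by fastforce
    have "\<phi> (f', x') \<in> B" if "agree_below k f f'" "agree_below k x x'" for f' x'
      using assms[OF that] p fx by simp
    then have "{h. agree_below k f h} \<times> {h. agree_below k x h} \<subseteq> \<phi> -` B"
      by auto
    moreover have "p \<in> {h. agree_below k f h} \<times> {h. agree_below k x h}"
      using fx by (simp add: agree_below_def)
    ultimately show "\<exists>T. open T \<and> p \<in> T \<and> T \<subseteq> \<phi> -` B \<inter> UNIV"
      by (intro exI[of _ "{h. agree_below k f h} \<times> {h. agree_below k x h}"])
        (simp add: open_Times open_agree_below)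
  qed
qed

text \<open>Hausdorffness is only asked of the coordinate space: the library has no \<^class>\<open>t2_space\<close>
  instance for function types.\<close>

lemma closed_image_if_continuous_left_inverse:
  fixes \<Phi> :: "'a::topological_space \<Rightarrow> 'i \<Rightarrow> 'b::t2_space"
  assumes "closed G" "continuous_on UNIV \<Phi>" "continuous_on UNIV \<Psi>" "\<And>p. \<Psi> (\<Phi> p) = p"
  shows "closed (\<Phi> ` G)"
proof -
  have "\<Phi> ` G = (\<Psi> -` G \<inter> UNIV) \<inter> {y. \<forall>i. \<Phi> (\<Psi> y) i = y i}"
    using assms(4) by (auto simp: fun_eq_iff) (metis image_eqI ext)
  moreover have "closed (\<Psi> -` G \<inter> UNIV)"
    using assms(1,3) by (rule closed_vimage_Int) simp
  moreover have "closed {y. \<Phi> (\<Psi> y) i = y i}" for i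
    using continuous_on_product_then_coordinatewise[OF continuous_on_compose2[OF assms(2,3) subset_UNIV]]
      continuous_on_product_coordinates
    by (rule closed_Collect_eq)
  ultimately show ?thesis
    by (simp add: closed_Int closed_Collect_all)
qed

definition inj_projection_of_closed :: "(nat \<Rightarrow> nat) set \<Rightarrow> bool" where
  "inj_projection_of_closed A \<longleftrightarrow>
     (\<exists>G :: ((nat \<Rightarrow> nat) \<times> (nat \<Rightarrow> nat)) set. closed G \<and> inj_on fst G \<and> A = fst ` G)"

lemma inj_projection_of_closed_if_closed:
  assumes "closed A"
  shows "inj_projection_of_closed A"
proof -
  let ?G = "A \<times> {x :: nat \<Rightarrow> nat. \<forall>i. x i = 0}"
  have "closed ?G"
    using assms by (intro closed_Times closed_Collect_all closed_Collect_eq) auto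
  moreover have "inj_on fst ?G"
    by (auto simp: inj_on_def fun_eq_iff)
  moreover have "A = fst ` ?G"
    by (force intro: rev_image_eqI[where x = "(_, \<lambda>_. 0)"])
  ultimately show ?thesis
    unfolding inj_projection_of_closed_def by blast
qed

lemma continuous_on_reindex_snd:
  "continuous_on UNIV (\<lambda>p :: ('a::topological_space) \<times> (nat \<Rightarrow> nat). (fst p, \<lambda>i. snd p (c i)))"
  by (intro continuous_intros continuous_on_product_then_coordinatewise)

lemma inj_projection_of_closed_INT:
  fixes A :: "nat \<Rightarrow> (nat \<Rightarrow> nat) set"
  assumes "\<And>n. inj_projection_of_closed (A n)"
  shows "inj_projection_of_closed (\<Inter>n. A n)"
proof -
  obtain G :: "nat \<Rightarrow> ((nat \<Rightarrow> nat) \<times> (nat \<Rightarrow> nat)) set"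
    where G: "\<And>n. closed (G n)" "\<And>n. inj_on fst (G n)" "\<And>n. A n = fst ` G n"
    using assms unfolding inj_projection_of_closed_def by metis
  define slice :: "nat \<Rightarrow> (nat \<Rightarrow> nat) \<Rightarrow> nat \<Rightarrow> nat"
    where "slice n x = (\<lambda>i. x (prod_encode (n, i)))" for n x
  define H where "H = (\<Inter>n. (\<lambda>p. (fst p, slice n (snd p))) -` G n)"
  have "closed ((\<lambda>p. (fst p, slice n (snd p))) -` G n)" for n
    using closed_vimage_Int[OF G(1) continuous_on_reindex_snd closed_UNIV] by (simp add: slice_def)
  then have "closed H"
    by (simp add: H_def closed_INT)
  moreover have "inj_on fst H"
  proof (rule inj_onI)
    fix p q assume "p \<in> H" "q \<in> H" "fst p = fst q"
    then have "slice n (snd p) = slice n (snd q)" for n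
      using inj_onD[OF G(2)[of n]] by (force simp: H_def)
    then have "snd p j = snd q j" for j
      using prod_decode_inverse[of j] by (cases "prod_decode j") (metis slice_def)
    then show "p = q"
      using \<open>fst p = fst q\<close> by (simp add: prod_eq_iff fun_eq_iff)
  qed
  moreover have "(\<Inter>n. A n) = fst ` H"
  proof
    show "fst ` H \<subseteq> (\<Inter>n. A n)"
      using G(3) by (fastforce simp: H_def intro: rev_image_eqI)
    show "(\<Inter>n. A n) \<subseteq> fst ` H"
    proof
      fix f assume "f \<in> (\<Inter>n. A n)"
      then have "f \<in> fst ` G n" for n
        using G(3) by blast
      then have "\<exists>x. (f, x) \<in> G n" for n
        by force
      then obtain xs where xs: "\<And>n. (f, xs n) \<in> G n"
        by metis
      define x where "x j = case_prod xs (prod_decode j)" for j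
      have "slice n x = xs n" for n
        by (simp add: slice_def x_def)
      then have "(f, x) \<in> H"
        using xs by (simp add: H_def)
      then show "f \<in> fst ` H"
        by force
    qed
  qed
  ultimately show ?thesis
    unfolding inj_projection_of_closed_def by blast
qed

lemma closed_Collect_tail_mem:
  fixes G :: "nat \<Rightarrow> ('a::topological_space \<times> (nat \<Rightarrow> nat)) set"
  assumes "\<And>n. closed (G n)"
  shows "closed {p. (fst p, \<lambda>i. snd p (Suc i)) \<in> G (snd p 0)}"
proof -
  have cont: "continuous_on UNIV (\<lambda>p :: 'a \<times> (nat \<Rightarrow> nat). snd p 0)"
    by (intro continuous_intros continuous_on_product_then_coordinatewise)
  have "closed {p :: 'a \<times> (nat \<Rightarrow> nat). snd p 0 \<noteq> n}" for n
    using closed_vimage_Int[OF closed_Compl[OF open_discrete[of "{n}"]] cont closed_UNIV]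
    by (simp add: vimage_def)
  moreover have "closed ((\<lambda>p. (fst p, \<lambda>i. snd p (Suc i))) -` G n)" for n
    using closed_vimage_Int[OF assms continuous_on_reindex_snd closed_UNIV] by simp
  moreover have "{p. (fst p, \<lambda>i. snd p (Suc i)) \<in> G (snd p 0)}
      = (\<Inter>n. {p. snd p 0 \<noteq> n} \<union> (\<lambda>p. (fst p, \<lambda>i. snd p (Suc i))) -` G n)"
    by auto
  ultimately show ?thesis
    by (simp add: closed_INT closed_Un)
qed

lemma inj_projection_of_closed_disjoint_UN:
  fixes A :: "nat \<Rightarrow> (nat \<Rightarrow> nat) set"
  assumes "\<And>n. inj_projection_of_closed (A n)" "disjoint_family A"
  shows "inj_projection_of_closed (\<Union>n. A n)"
proof -
  obtain G :: "nat \<Rightarrow> ((nat \<Rightarrow> nat) \<times> (nat \<Rightarrow> nat)) set"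
    where G: "\<And>n. closed (G n)" "\<And>n. inj_on fst (G n)" "\<And>n. A n = fst ` G n"
    using assms(1) unfolding inj_projection_of_closed_def by metis
  define tail :: "(nat \<Rightarrow> nat) \<times> (nat \<Rightarrow> nat) \<Rightarrow> (nat \<Rightarrow> nat) \<times> (nat \<Rightarrow> nat)"
    where "tail = (\<lambda>p. (fst p, \<lambda>i. snd p (Suc i)))"
  define H where "H = {p. tail p \<in> G (snd p 0)}"
  have fst_mem: "fst p \<in> A (snd p 0)" if "p \<in> H" for p
    using that G(3)[of "snd p 0"] by (auto simp: H_def tail_def intro: rev_image_eqI)
  have "closed H"
    unfolding H_def tail_def using G(1) by (rule closed_Collect_tail_mem)
  moreover have "inj_on fst H"
  proof (rule inj_onI)
    fix p q assume H: "p \<in> H" "q \<in> H" and "fst p = fst q"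
    have "fst p \<in> A (snd p 0)" "fst p \<in> A (snd q 0)"
      using fst_mem[OF H(1)] fst_mem[OF H(2)] \<open>fst p = fst q\<close> by simp_all
    then have "snd p 0 = snd q 0"
      using assms(2) by (auto simp: disjoint_family_on_def)
    then have "tail p \<in> G (snd q 0)" "tail q \<in> G (snd q 0)"
      using H by (simp_all add: H_def)
    then have "tail p = tail q"
      using \<open>fst p = fst q\<close> by (intro inj_onD[OF G(2)]) (simp_all add: tail_def)
    then have "snd p j = snd q j" for j
      using \<open>snd p 0 = snd q 0\<close> by (cases j) (auto simp: tail_def fun_eq_iff)
    then show "p = q"
      using \<open>fst p = fst q\<close> by (simp add: prod_eq_iff fun_eq_iff)
  qed
  moreover have "(\<Union>n. A n) = fst ` H"
  proof
    show "fst ` H \<subseteq> (\<Union>n. A n)"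
      using fst_mem by blast
    show "(\<Union>n. A n) \<subseteq> fst ` H"
    proof
      fix f assume "f \<in> (\<Union>n. A n)"
      then obtain n y where y: "(f, y) \<in> G n"
        using G(3) by force
      then have "(f, case_nat n y) \<in> H"
        by (simp add: H_def tail_def)
      then show "f \<in> fst ` H"
        by force
    qed
  qed
  ultimately show ?thesis
    unfolding inj_projection_of_closed_def by blast
qed

definition cylinder_depth :: "(nat \<Rightarrow> nat) set \<Rightarrow> (nat \<Rightarrow> nat) \<Rightarrow> nat" where
  "cylinder_depth U g = (LEAST k. {h. agree_below k g h} \<subseteq> U)"

lemma closed_cylinder_depth_level:
  assumes "open U"
  shows "closed {g \<in> U. cylinder_depth U g = k}"
proof (rule closed_if_determined_below)
  fix g h assume gh: "agree_below k g h" and "g \<in> {g \<in> U. cylinder_depth U g = k}"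
  then have "g \<in> U" "cylinder_depth U g = k"
    by simp_all
  have same: "agree_below j g h' \<longleftrightarrow> agree_below j h h'" if "j \<le> k" for j h'
    using gh that by (auto simp: agree_below_def)
  have "{h'. agree_below k g h'} \<subseteq> U"
    using open_contains_agree_below[OF assms \<open>g \<in> U\<close>] \<open>cylinder_depth U g = k\<close>
    unfolding cylinder_depth_def by (metis LeastI)
  then have h_cyl: "{h'. agree_below k h h'} \<subseteq> U"
    using same by blast
  then have "h \<in> U"
    by (auto simp: agree_below_def)
  moreover have "cylinder_depth U h = k"
    unfolding cylinder_depth_def
  proof (rule Least_equality)
    show "{h'. agree_below k h h'} \<subseteq> U"
      by (fact h_cyl)
    fix j assume "{h'. agree_below j h h'} \<subseteq> U"
    show "k \<le> j"
    proof (rule ccontr)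
      assume "\<not> k \<le> j"
      then have "{h'. agree_below j g h'} \<subseteq> U"
        using same[of j] \<open>{h'. agree_below j h h'} \<subseteq> U\<close> by auto
      then have "cylinder_depth U g \<le> j"
        unfolding cylinder_depth_def by (rule Least_le)
      with \<open>cylinder_depth U g = k\<close> \<open>\<not> k \<le> j\<close> show False
        by simp
    qed
  qed
  ultimately show "h \<in> {g \<in> U. cylinder_depth U g = k}"
    by simp
qed

lemma inj_projection_of_closed_if_open:
  assumes "open U"
  shows "inj_projection_of_closed U"
proof -
  define D where "D k = {g \<in> U. cylinder_depth U g = k}" for k
  have "inj_projection_of_closed (D k)" for k
    unfolding D_def using assms
    by (intro inj_projection_of_closed_if_closed closed_cylinder_depth_level)
  moreover have "disjoint_family D"
    by (auto simp: disjoint_family_on_def D_def)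
  moreover have "U = (\<Union>k. D k)"
    by (auto simp: D_def)
  ultimately show ?thesis
    using inj_projection_of_closed_disjoint_UN by metis
qed

lemma inj_projection_of_closed_UN:
  fixes A :: "nat \<Rightarrow> (nat \<Rightarrow> nat) set"
  assumes "\<And>n. inj_projection_of_closed (A n)" "\<And>n. inj_projection_of_closed (- A n)"
  shows "inj_projection_of_closed (\<Union>n. A n)"
proof -
  have disjointed_eq: "disjointed A n = (\<Inter>j. if j < n then - A j else A n)" for n
    by (force simp: disjointed_def)
  have "inj_projection_of_closed (disjointed A n)" for n
    unfolding disjointed_eq by (rule inj_projection_of_closed_INT) (simp add: assms)
  then show ?thesis
    using inj_projection_of_closed_disjoint_UN[OF _ disjoint_family_disjointed] UN_disjointed_eq
    by metis
qed

lemma inj_projection_of_closed_if_borel: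
  assumes "A \<in> sets borel"
  shows "inj_projection_of_closed A"
proof -
  from assms have "inj_projection_of_closed A \<and> inj_projection_of_closed (- A)"
    unfolding sets_borel
  proof (induction rule: sigma_sets.induct)
    case (Basic a)
    then show ?case
      by (simp add: inj_projection_of_closed_if_open inj_projection_of_closed_if_closed closed_Compl)
  next
    case Empty
    then show ?case
      using inj_projection_of_closed_if_closed by simp
  next
    case (Compl a)
    then show ?case
      by (simp add: Compl_eq_Diff_UNIV[symmetric])
  next
    case (Union A)
    then show ?case
      by (simp add: inj_projection_of_closed_UN inj_projection_of_closed_INT)
  qed
  then show ?thesis ..
qed

definition prefix_code :: "(nat \<Rightarrow> nat) \<times> (nat \<Rightarrow> nat) \<Rightarrow> nat \<Rightarrow> nat" where
  "prefix_code p m = list_encode (map (\<lambda>i. prod_encode (fst p i, snd p i)) [0..<Suc m])"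

lemma prefix_code_nth:
  "i \<le> m \<Longrightarrow> prod_decode (list_decode (prefix_code p m) ! i) = (fst p i, snd p i)"
  by (simp add: prefix_code_def prod_encode_inverse nth_append del: upt_Suc)

lemma prefix_code_eq_imp_eq:
  assumes "prefix_code p m = prefix_code q m" "i \<le> m"
  shows "fst p i = fst q i"
  using prefix_code_nth[OF assms(2), of p] prefix_code_nth[OF assms(2), of q] assms(1) by simp

lemma prefix_code_cong:
  assumes "agree_below (Suc m) (fst p) (fst q)" "agree_below (Suc m) (snd p) (snd q)"
  shows "prefix_code p m = prefix_code q m"
  using assms unfolding prefix_code_def agree_below_def
  by (intro arg_cong[where f = list_encode] map_cong) auto

definition coded :: "(nat \<Rightarrow> nat) \<Rightarrow> (nat \<Rightarrow> nat) \<Rightarrow> (nat \<Rightarrow> nat) \<times> (nat \<Rightarrow> nat) \<Rightarrow> nat \<Rightarrow> nat" where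
  "coded e \<sigma> p n = (if n \<in> range e then prefix_code p (inv e n) else fst p (\<sigma> n))"

definition decoded :: "(nat \<Rightarrow> nat) \<Rightarrow> (nat \<Rightarrow> nat) \<Rightarrow> (nat \<Rightarrow> nat) \<times> (nat \<Rightarrow> nat)" where
  "decoded e g = (\<lambda>i. fst (prod_decode (list_decode (g (e i)) ! i)),
                  \<lambda>i. snd (prod_decode (list_decode (g (e i)) ! i)))"

lemma coded_code_position: "inj e \<Longrightarrow> coded e \<sigma> p (e m) = prefix_code p m"
  by (simp add: coded_def)

lemma decoded_coded: "inj e \<Longrightarrow> decoded e (coded e \<sigma> p) = p"
  by (simp add: decoded_def coded_code_position prefix_code_nth)

lemma continuous_on_coded: "continuous_on UNIV (coded e \<sigma>)"
proof (rule continuous_on_coordinatewise_then_product)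
  fix n
  show "continuous_on UNIV (\<lambda>p. coded e \<sigma> p n)"
  proof (rule continuous_on_if_determined_below[where k = "Suc (inv e n + \<sigma> n)"])
    fix f x f' x'
    assume "agree_below (Suc (inv e n + \<sigma> n)) f f'" "agree_below (Suc (inv e n + \<sigma> n)) x x'"
    then have "prefix_code (f, x) (inv e n) = prefix_code (f', x') (inv e n)" "f (\<sigma> n) = f' (\<sigma> n)"
      by (auto simp: agree_below_def intro!: prefix_code_cong)
    then show "coded e \<sigma> (f, x) n = coded e \<sigma> (f', x') n"
      by (simp add: coded_def)
  qed
qed

lemma continuous_on_decoded: "continuous_on UNIV (decoded e)"
  unfolding decoded_def
  by (intro continuous_on_Pair continuous_on_coordinatewise_then_product
      continuous_on_compose2[OF Topological_Spaces.continuous_on_discrete continuous_on_product_coordinates])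
      auto

lemma closed_coded_image:
  assumes "inj e" "closed G"
  shows "closed (coded e \<sigma> ` G)"
  by (rule closed_image_if_continuous_left_inverse[where \<Psi> = "decoded e",
        OF assms(2) continuous_on_coded continuous_on_decoded decoded_coded[OF assms(1)]])

lemma is_ideal_subset: "is_ideal I \<Longrightarrow> A \<in> I \<Longrightarrow> B \<subseteq> A \<Longrightarrow> B \<in> I"
  unfolding is_ideal_def by blast

lemma is_ideal_Un: "is_ideal I \<Longrightarrow> A \<in> I \<Longrightarrow> B \<in> I \<Longrightarrow> A \<union> B \<in> I"
  unfolding is_ideal_def by blast

definition coding_frame :: "nat set set \<Rightarrow> (nat \<Rightarrow> nat) \<Rightarrow> (nat \<Rightarrow> nat) \<Rightarrow> bool" where
  "coding_frame I e \<sigma> \<longleftrightarrow> inj e \<and>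
     (\<forall>A\<in>I. {n. n \<notin> range e \<and> \<sigma> n \<in> A} \<in> I) \<and>
     (\<forall>h. \<exists>h'. \<forall>f. \<not> I_ED I f h' \<longrightarrow> {n. n \<notin> range e \<and> f (\<sigma> n) = h n} \<notin> I)"

lemma I_ED_coded:
  assumes I: "is_ideal I" "fin_ideal \<subseteq> I" and frame: "coding_frame I e \<sigma>"
    and "fst p \<noteq> fst q" "I_ED I (fst p) (fst q)"
  shows "I_ED I (coded e \<sigma> p) (coded e \<sigma> q)"
proof -
  obtain i where i: "fst p i \<noteq> fst q i"
    using \<open>fst p \<noteq> fst q\<close> by (auto simp: fun_eq_iff)
  have "inj e" and sparse: "\<And>A. A \<in> I \<Longrightarrow> {n. n \<notin> range e \<and> \<sigma> n \<in> A} \<in> I"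
    using frame by (simp_all add: coding_frame_def)
  have "{n. coded e \<sigma> p n = coded e \<sigma> q n}
      \<subseteq> e ` {..<i} \<union> {n. n \<notin> range e \<and> \<sigma> n \<in> {n. fst p n = fst q n}}"
  proof
    fix n assume n: "n \<in> {n. coded e \<sigma> p n = coded e \<sigma> q n}"
    show "n \<in> e ` {..<i} \<union> {n. n \<notin> range e \<and> \<sigma> n \<in> {n. fst p n = fst q n}}"
    proof (cases "n \<in> range e")
      case True
      then obtain m where m: "n = e m"
        by blast
      then have "prefix_code p m = prefix_code q m"
        using n coded_code_position[OF \<open>inj e\<close>] by simp
      then have "m < i"
        using i prefix_code_eq_imp_eq by (metis not_less)
      then show ?thesis
        using m by blast
    next
      case False
      then show ?thesis
        using n by (simp add: coded_def)
    qed
  qed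
  moreover have "e ` {..<i} \<in> I"
    using I(2) by (simp add: fin_ideal_def subset_eq)
  moreover have "{n. n \<notin> range e \<and> \<sigma> n \<in> {n. fst p n = fst q n}} \<in> I"
    using sparse \<open>I_ED I (fst p) (fst q)\<close> unfolding I_ED_def by blast
  ultimately show ?thesis
    unfolding I_ED_def by (meson I(1) is_ideal_Un is_ideal_subset)
qed

lemma not_I_ED_coded:
  assumes "is_ideal I" "{n. n \<notin> range e \<and> fst p (\<sigma> n) = h n} \<notin> I"
  shows "\<not> I_ED I (coded e \<sigma> p) h"
proof -
  have "{n. n \<notin> range e \<and> fst p (\<sigma> n) = h n} \<subseteq> {n. coded e \<sigma> p n = h n}"
    by (auto simp: coded_def)
  then show ?thesis
    using assms is_ideal_subset unfolding I_ED_def by blast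
qed

lemma closed_I_MED_if_coding_frame:
  assumes I: "is_ideal I" "fin_ideal \<subseteq> I" and frame: "coding_frame I e \<sigma>"
    and E: "I_MED I E" "inj_projection_of_closed E"
  shows "\<exists>F. closed F \<and> I_MED I F"
proof -
  obtain G :: "((nat \<Rightarrow> nat) \<times> (nat \<Rightarrow> nat)) set"
    where G: "closed G" "inj_on fst G" "E = fst ` G"
    using E(2) unfolding inj_projection_of_closed_def by blast
  have "closed (coded e \<sigma> ` G)"
    using frame G(1) by (simp add: coding_frame_def closed_coded_image)
  moreover have "I_MED I (coded e \<sigma> ` G)"
    unfolding I_MED_def
  proof (intro conjI ballI impI allI)
    fix g g' assume "g \<in> coded e \<sigma> ` G" "g' \<in> coded e \<sigma> ` G" "g \<noteq> g'"
    then obtain p q where pq: "p \<in> G" "q \<in> G" "g = coded e \<sigma> p" "g' = coded e \<sigma> q" "p \<noteq> q"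
      by blast
    then have "fst p \<noteq> fst q"
      using G(2) by (meson inj_onD)
    moreover have "fst p \<in> E" "fst q \<in> E"
      using pq G(3) by simp_all
    ultimately have "I_ED I (fst p) (fst q)"
      using E(1) by (simp add: I_MED_def)
    then show "I_ED I g g'"
      using I_ED_coded[OF I frame \<open>fst p \<noteq> fst q\<close>] pq by simp
  next
    fix h
    obtain h' where h': "\<And>f. \<not> I_ED I f h' \<Longrightarrow> {n. n \<notin> range e \<and> f (\<sigma> n) = h n} \<notin> I"
      using frame unfolding coding_frame_def by blast
    obtain p where p: "p \<in> G" "\<not> I_ED I (fst p) h'"
      using E(1) G(3) unfolding I_MED_def by blast
    have "\<not> I_ED I (coded e \<sigma> p) h"
      using I(1) h'[OF p(2)] by (rule not_I_ED_coded)
    then show "\<exists>g\<in>coded e \<sigma> ` G. \<not> I_ED I g h"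
      using p(1) by blast
  qed
  ultimately show ?thesis
    by blast
qed

lemma coding_frame_enumerate:
  assumes I: "is_ideal I" and Q: "Q \<in> I" "infinite Q"
  shows "coding_frame I (enumerate Q) id"
  unfolding coding_frame_def
proof (intro conjI ballI allI exI impI)
  have range: "range (enumerate Q) = Q"
    using Q(2) by (rule range_enumerate)
  show "inj (enumerate Q)"
    using Q(2) strict_mono_enumerate strict_mono_imp_inj_on by blast
  show "{n. n \<notin> range (enumerate Q) \<and> id n \<in> A} \<in> I" if "A \<in> I" for A
    by (rule is_ideal_subset[OF I that]) auto
  fix h f :: "nat \<Rightarrow> nat"
  assume "\<not> I_ED I f h"
  show "{n. n \<notin> range (enumerate Q) \<and> f (id n) = h n} \<notin> I"
  proof
    assume "{n. n \<notin> range (enumerate Q) \<and> f (id n) = h n} \<in> I"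
    then have "{n. n \<notin> Q \<and> f n = h n} \<union> Q \<in> I"
      using is_ideal_Un[OF I _ Q(1)] range by simp
    moreover have "{n. f n = h n} \<subseteq> {n. n \<notin> Q \<and> f n = h n} \<union> Q"
      by blast
    ultimately show False
      using is_ideal_subset[OF I] \<open>\<not> I_ED I f h\<close> unfolding I_ED_def by blast
  qed
qed

lemma coding_frame_odd:
  assumes "fin_ideal \<subseteq> I" "\<And>A. A \<in> I \<Longrightarrow> finite A"
  shows "coding_frame I (\<lambda>n. 2 * n + 1) (\<lambda>n. n div 2)"
  unfolding coding_frame_def
proof (intro conjI ballI allI exI impI)
  show "inj (\<lambda>n::nat. 2 * n + 1)"
    by (simp add: inj_on_def)
  show "{n. n \<notin> range (\<lambda>n. 2 * n + 1) \<and> n div 2 \<in> A} \<in> I" if "A \<in> I" for A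
  proof -
    have "n \<in> (\<lambda>a. 2 * a) ` A" if "n \<notin> range (\<lambda>n. 2 * n + 1)" "n div 2 \<in> A" for n
    proof -
      have "even n"
      proof (rule ccontr)
        assume "odd n"
        then obtain b where "n = 2 * b + 1"
          by (rule oddE)
        with that(1) show False
          by blast
      qed
      then show ?thesis
        using that(2) by (metis dvd_mult_div_cancel image_eqI)
    qed
    then have "{n. n \<notin> range (\<lambda>n. 2 * n + 1) \<and> n div 2 \<in> A} \<subseteq> (\<lambda>a. 2 * a) ` A"
      by blast
    then show ?thesis
      using assms that finite_subset unfolding fin_ideal_def by blast
  qed
  fix h f :: "nat \<Rightarrow> nat"
  assume "\<not> I_ED I f (\<lambda>n. h (2 * n))"
  then have "infinite {n. f n = h (2 * n)}"
    using assms(1) unfolding I_ED_def fin_ideal_def by blast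
  then have "infinite ((\<lambda>a. 2 * a) ` {n. f n = h (2 * n)})"
    by (simp add: finite_image_iff inj_on_def)
  moreover have "(\<lambda>a. 2 * a) ` {n. f n = h (2 * n)}
      \<subseteq> {n. n \<notin> range (\<lambda>n. 2 * n + 1) \<and> f (n div 2) = h n}"
    by auto presburger
  ultimately show "{n. n \<notin> range (\<lambda>n. 2 * n + 1) \<and> f (n div 2) = h n} \<notin> I"
    using assms(2) finite_subset by blast
qed

lemma coding_frame_exists:
  assumes "is_ideal I" "fin_ideal \<subseteq> I"
  obtains e \<sigma> where "coding_frame I e \<sigma>"
proof (cases "\<exists>Q\<in>I. infinite Q")
  case True
  then obtain Q where "Q \<in> I" "infinite Q"
    by blast
  then show thesis
    by (rule that[OF coding_frame_enumerate[OF assms(1)]])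
next
  case False
  then show thesis
    by (intro that[OF coding_frame_odd[OF assms(2)]]) blast
qed

theorem theorem6p2:
  fixes I :: "nat set set"
  assumes "is_ideal I"
    and "fin_ideal \<subseteq> I"
    and "\<exists>E :: (nat \<Rightarrow> nat) set. E \<in> sets borel \<and> I_MED I E"
  shows "\<exists>E :: (nat \<Rightarrow> nat) set. closed E \<and> I_MED I E"
proof -
  obtain E where "E \<in> sets borel" "I_MED I E"
    using assms(3) by blast
  obtain e \<sigma> where "coding_frame I e \<sigma>"
    using coding_frame_exists[OF assms(1,2)] .
  moreover have "inj_projection_of_closed E"
    using \<open>E \<in> sets borel\<close> by (rule inj_projection_of_closed_if_borel)
  ultimately show ?thesis
    using closed_I_MED_if_coding_frame[OF assms(1,2)] \<open>I_MED I E\<close> by blast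
qed

end
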